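(* For every $N\in\mathbb{N}$, $\mathrm{Dec}_N=\mathrm{CP}_N+\mathrm{coCP}_N=(\mathrm{CP}_N\cap\mathrm{coCP}_N)^*$, where $(\mathcal{K})^*=\{|\mu\rangle\in(\mathbb{R}^4)^{\otimes N}:\langle\mu|\kappa\rangle\ge0\ \forall|\kappa\rangle\in\mathcal{K}\}$ with the Euclidean inner product. In particular, a Pauli diagonal map is decomposable iff it is the sum of a completely positive Pauli diagonal map and a completely copositive Pauli diagonal map.
   Context: Pauli matrices $\sigma_1=I_2$, $\sigma_2=\begin{pmatrix}0&1\\1&0\end{pmatrix}$, $\sigma_3=\begin{pmatrix}1&0\\0&-1\end{pmatrix}$, $\sigma_4=\begin{pmatrix}0&-i\\i&0\end{pmatrix}$. For $|\mu\rangle\in(\mathbb{R}^4)^{\otimes N}$, $\Pi^{(N)}_\mu(X)=\sum_{i_1,\dots,i_N}\frac{\mu_{i_1\cdots i_N}}{2^N}\mathrm{Tr}[(\sigma_{i_1}\otimes\cdots\otimes\sigma_{i_N})X]\sigma_{i_1}\otimes\cdots\otimes\sigma_{i_N}$ on $\mathcal{M}_2^{\otimes N}$. $\mathrm{CP}_N$ (resp. $\mathrm{coCP}_N$) is the set of $|\mu\rangle$ such that $\Pi^{(N)}_\mu$ (resp. $\vartheta_2^{\otimes N}\circ\Pi^{(N)}_\mu$, $\vartheta_2$ the transpose) is completely positive. $\mathrm{Dec}_N$ is the set of $|\mu\rangle$ such that $\Pi^{(N)}_\mu=T+\vartheta_2^{\otimes N}\circ S$ for some completely positive maps $T,S:\mathcal{M}_2^{\otimes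 N}\to\mathcal{M}_2^{\otimes N}$ (not required to be Pauli diagonal). *)

theory Defs
  imports "HOL-Analysis.Analysis" "Jordan_Normal_Form.Matrix"
begin

(* Pauli matrices: index 0,1,2,3 stands for sigma_1 = I, sigma_2 = X, sigma_3 = Z, sigma_4 = Y *)
definition pauli :: "nat \<Rightarrow> nat \<Rightarrow> nat \<Rightarrow> complex" where
  "pauli i a b =
     (if i = 0 then (if a = b then 1 else 0)
      else if i = 1 then (if a \<noteq> b then 1 else 0)
      else if i = 2 then (if a = b then (if a = 0 then 1 else -1) else 0)
      else (if a = 0 \<and> b = 1 then - \<i> else if a = 1 \<and> b = 0 then \<i> else 0))"

(* k-th tensor factor of basis index a of (C^2)^{\<otimes> N} *)
definition qbit :: "nat \<Rightarrow> nat \<Rightarrow> nat" where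
  "qbit k a = (a div 2 ^ k) mod 2"

definition pidx :: "nat \<Rightarrow> nat list set" where
  "pidx N = {is. length is = N \<and> (\<forall>i\<in>set is. i < 4)}"

(* elements of (R^4)^{\<otimes> N}, as real functions supported on the multi-indices *)
definition tens :: "nat \<Rightarrow> (nat list \<Rightarrow> real) set" where
  "tens N = {\<mu>. \<forall>is. is \<notin> pidx N \<longrightarrow> \<mu> is = 0}"

(* sigma_{i_1} \<otimes> ... \<otimes> sigma_{i_N} as a 2^N x 2^N matrix *)
definition pauli_tensor :: "nat list \<Rightarrow> complex mat" where
  "pauli_tensor is = mat (2 ^ length is) (2 ^ length is)
     (\<lambda>(a, b). \<Prod>k<length is. pauli (is ! k) (qbit k a) (qbit k b))"

definition mtrace :: "complex mat \<Rightarrow> complex" where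
  "mtrace A = (\<Sum>i<dim_row A. A $$ (i, i))"

definition pauli_map :: "nat \<Rightarrow> (nat list \<Rightarrow> real) \<Rightarrow> complex mat \<Rightarrow> complex mat" where
  "pauli_map N \<mu> X = mat (2 ^ N) (2 ^ N) (\<lambda>(a, b).
     \<Sum>is\<in>pidx N. complex_of_real (\<mu> is / 2 ^ N) * mtrace (pauli_tensor is * X)
                     * pauli_tensor is $$ (a, b))"

definition psd :: "nat \<Rightarrow> complex mat \<Rightarrow> bool" where
  "psd n A \<longleftrightarrow> A \<in> carrier_mat n n \<and>
     (\<forall>v \<in> carrier_vec n. let z = (\<Sum>i<n. \<Sum>j<n. cnj (v $ i) * A $$ (i, j) * v $ j)
                          in Im z = 0 \<and> Re z \<ge> 0)"

definition lin_map :: "nat \<Rightarrow> (complex mat \<Rightarrow> complex mat) \<Rightarrow> bool" where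
  "lin_map d T \<longleftrightarrow>
     (\<forall>X \<in> carrier_mat d d. T X \<in> carrier_mat d d) \<and>
     (\<forall>X \<in> carrier_mat d d. \<forall>Y \<in> carrier_mat d d. T (X + Y) = T X + T Y) \<and>
     (\<forall>c. \<forall>X \<in> carrier_mat d d. T (c \<cdot>\<^sub>m X) = c \<cdot>\<^sub>m T X)"

(* id_k \<otimes> T applied to a (k d) x (k d) matrix viewed as k x k blocks of d x d matrices *)
definition ampl :: "nat \<Rightarrow> nat \<Rightarrow> (complex mat \<Rightarrow> complex mat) \<Rightarrow> complex mat \<Rightarrow> complex mat" where
  "ampl k d T X = mat (k * d) (k * d) (\<lambda>(i, j).
     T (mat d d (\<lambda>(a, b). X $$ ((i div d) * d + a, (j div d) * d + b))) $$ (i mod d, j mod d))"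

definition cp_map :: "nat \<Rightarrow> (complex mat \<Rightarrow> complex mat) \<Rightarrow> bool" where
  "cp_map d T \<longleftrightarrow> lin_map d T \<and> (\<forall>k. \<forall>X. psd (k * d) X \<longrightarrow> psd (k * d) (ampl k d T X))"

definition CP :: "nat \<Rightarrow> (nat list \<Rightarrow> real) set" where
  "CP N = {\<mu> \<in> tens N. cp_map (2 ^ N) (pauli_map N \<mu>)}"

definition coCP :: "nat \<Rightarrow> (nat list \<Rightarrow> real) set" where
  "coCP N = {\<mu> \<in> tens N. cp_map (2 ^ N) (\<lambda>X. transpose_mat (pauli_map N \<mu> X))}"

definition Dec :: "nat \<Rightarrow> (nat list \<Rightarrow> real) set" where
  "Dec N = {\<mu> \<in> tens N. \<exists>T S. cp_map (2 ^ N) T \<and> cp_map (2 ^ N) S \<and>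
     (\<forall>X \<in> carrier_mat (2 ^ N) (2 ^ N). pauli_map N \<mu> X = T X + transpose_mat (S X))}"

definition msum :: "('a \<Rightarrow> real) set \<Rightarrow> ('a \<Rightarrow> real) set \<Rightarrow> ('a \<Rightarrow> real) set" where
  "msum A B = {\<lambda>x. a x + b x | a b. a \<in> A \<and> b \<in> B}"

definition dual_cone :: "nat \<Rightarrow> (nat list \<Rightarrow> real) set \<Rightarrow> (nat list \<Rightarrow> real) set" where
  "dual_cone N K = {\<mu> \<in> tens N. \<forall>\<kappa>\<in>K. (\<Sum>is\<in>pidx N. \<mu> is * \<kappa> is) \<ge> 0}"

end

theory Submission
  imports Defs
begin

(* The Pauli diagonal map Pi_mu is the Kraus map X |-> sum_j lambda_j sigma_j X sigma_j with weights
   lambda = H mu / 4^N, where H is the symmetric +-1 matrix of the commutation signs of the Pauli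
   tensors, H^2 = 4^N; composed with the transpose it is the Kraus map with Kraus operators
   Y sigma_j and weights H (nu mu) / 4^N for a sign vector nu. Both Kraus families are orthogonal,
   so the Choi form at the j-th Kraus operator isolates the j-th weight: CP_N and coCP_N are the
   polyhedral cones {H mu >= 0} and {H (nu mu) >= 0}.
   The Hilbert-Schmidt pairing of Choi matrices is the Euclidean pairing on Pauli diagonal maps
   and is nonnegative between a decomposable map and a map in CP_N \<inter> coCP_N; this gives
   Dec_N \<subseteq> (CP_N \<inter> coCP_N)^*. Farkas' lemma writes every element of that dual cone as a
   nonnegative combination of the functionals H and H nu, i.e. as an element of CP_N + coCP_N,
   and CP_N + coCP_N \<subseteq> Dec_N is immediate. *)

section \<open>Multi-indices and sums over qubits\<close>

lemma pidx_0: "pidx 0 = {[]}"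
  by (auto simp: pidx_def)

lemma pidx_Suc: "pidx (Suc N) = (\<lambda>(j, js). j # js) ` ({..<4} \<times> pidx N)"
  by (auto simp: pidx_def length_Suc_conv image_iff)

lemma finite_pidx: "finite (pidx N)"
  by (induction N) (auto simp: pidx_0 pidx_Suc)

lemma pidx_length: "is \<in> pidx N \<Longrightarrow> length is = N"
  by (simp add: pidx_def)

lemma pidx_nth_less: "is \<in> pidx N \<Longrightarrow> k < N \<Longrightarrow> is ! k < 4"
  by (simp add: pidx_def)

lemma sum_pidx_prod_nth:
  "(\<Sum>js\<in>pidx N. \<Prod>k<N. f k (js ! k)) = (\<Prod>k<N. \<Sum>j<4. f k j :: 'a::comm_semiring_1)"
proof (induction N arbitrary: f)
  case 0
  then show ?case by (simp add: pidx_0)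
next
  case (Suc N)
  have inj: "inj_on (\<lambda>(j::nat, js). j # js) A" for A
    by (auto simp: inj_on_def)
  have "(\<Sum>js\<in>pidx (Suc N). \<Prod>k<Suc N. f k (js ! k))
      = (\<Sum>(j, js)\<in>{..<4} \<times> pidx N. f 0 j * (\<Prod>k<N. f (Suc k) (js ! k)))"
    unfolding pidx_Suc sum.reindex[OF inj]
    by (simp add: case_prod_beta' prod.lessThan_Suc_shift del: prod.lessThan_Suc)
  also have "\<dots> = (\<Sum>j<4. f 0 j) * (\<Prod>k<N. \<Sum>j<4. f (Suc k) j)"
    by (simp add: sum.cartesian_product[symmetric] sum_distrib_left sum_distrib_right
        Suc[of "\<lambda>k. f (Suc k)", symmetric])
       (rule sum.swap)
  also have "\<dots> = (\<Prod>k<Suc N. \<Sum>j<4. f k j)"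
    by (simp add: prod.lessThan_Suc_shift del: prod.lessThan_Suc)
  finally show ?case .
qed

lemma sum_lessThan_mult_blocks:
  "(\<Sum>p<m * d. f p) = (\<Sum>a<m. \<Sum>i<d. f (a * d + i :: nat))"
proof -
  have "sum f {a * d..<a * d + d} = (\<Sum>i<d. f (a * d + i))" for a
    using sum.shift_bounds_nat_ivl[of f 0 "a * d" d] by (simp add: atLeast0LessThan add.commute)
  then show ?thesis by (simp add: sum.nat_group[symmetric])
qed

lemma qbit_less: "qbit k a < 2"
  by (simp add: qbit_def)

lemma qbit_block: "i < 2 \<Longrightarrow> qbit 0 (a * 2 + i) = i" "i < 2 \<Longrightarrow> qbit (Suc k) (a * 2 + i) = qbit k a"
  by (simp_all add: qbit_def div_mult2_eq)

lemma sum_qbit_prod: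
  "(\<Sum>a<2 ^ N. \<Prod>k<N. g k (qbit k a)) = (\<Prod>k<N. \<Sum>x<2. g k x :: 'a::comm_semiring_1)"
proof (induction N arbitrary: g)
  case 0
  then show ?case by simp
next
  case (Suc N)
  have "(\<Sum>a<2 ^ Suc N. \<Prod>k<Suc N. g k (qbit k a))
      = (\<Sum>a<2 ^ N. \<Sum>i<2. g 0 i * (\<Prod>k<N. g (Suc k) (qbit k a)))"
    unfolding power_Suc2 sum_lessThan_mult_blocks
    by (intro sum.cong refl) (simp add: prod.lessThan_Suc_shift qbit_block del: prod.lessThan_Suc)
  also have "\<dots> = (\<Sum>x<2. g 0 x) * (\<Prod>k<N. \<Sum>x<2. g (Suc k) x)"
    by (simp add: sum_distrib_left sum_distrib_right Suc[of "\<lambda>k. g (Suc k)", symmetric] sum.swap[of _ "{..<2}"])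
  also have "\<dots> = (\<Prod>k<Suc N. \<Sum>x<2. g k x)"
    by (simp add: prod.lessThan_Suc_shift del: prod.lessThan_Suc)
  finally show ?case .
qed

lemma prod_nth_eq_delta:
  assumes "is \<in> pidx N" "js \<in> pidx N"
  shows "(\<Prod>k<N. if is ! k = js ! k then c else 0) = (if is = js then c ^ N else (0::'a::comm_semiring_1))"
proof (cases "is = js")
  case False
  then obtain k where "k < N" "is ! k \<noteq> js ! k"
    using assms by (metis nth_equalityI pidx_length)
  then show ?thesis using False by (auto intro!: prod_zero)
qed simp

section \<open>Single-qubit Pauli identities\<close>

lemma less_2_cases: "x < (2::nat) \<Longrightarrow> x = 0 \<or> x = 1"
  by auto

lemma less_4_cases: "x < (4::nat) \<Longrightarrow> x = 0 \<or> x = 1 \<or> x = 2 \<or> x = 3"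
  by auto

lemma sum_lessThan_2: "(\<Sum>x::nat<2. f x) = f 0 + (f 1 :: 'a::comm_monoid_add)"
  by (simp add: eval_nat_numeral add.commute)

lemma sum_lessThan_4: "(\<Sum>j::nat<4. f j) = f 0 + f 1 + f 2 + (f 3 :: 'a::comm_monoid_add)"
  by (simp add: eval_nat_numeral add.commute add.left_commute)

(* sigma_j * sigma_i * sigma_j = comm_sign i j * sigma_i *)
definition comm_sign :: "nat \<Rightarrow> nat \<Rightarrow> real" where
  "comm_sign i j = (if i = 0 \<or> j = 0 \<or> i = j then 1 else -1)"

(* Y * sigma_i^T * Y = transpose_sign i * sigma_i *)
definition transpose_sign :: "nat \<Rightarrow> real" where
  "transpose_sign i = (if i = 0 then 1 else -1)"

definition ypauli :: "nat \<Rightarrow> nat \<Rightarrow> nat \<Rightarrow> complex" where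
  "ypauli j x y = (\<Sum>z<2. pauli 3 x z * pauli j z y)"

lemma pauli_kernel_comm_sign:
  "i < 4 \<Longrightarrow> a < 2 \<Longrightarrow> b < 2 \<Longrightarrow> c < 2 \<Longrightarrow> e < 2 \<Longrightarrow>
    (\<Sum>j<4. of_real (comm_sign i j) * pauli j a c * cnj (pauli j b e)) = 2 * (pauli i e c * pauli i a b)"
  unfolding sum_lessThan_4
  by (drule less_4_cases, (drule less_2_cases)+, elim disjE; simp add: pauli_def comm_sign_def mult.assoc)

lemma ypauli_kernel_comm_sign:
  "i < 4 \<Longrightarrow> a < 2 \<Longrightarrow> b < 2 \<Longrightarrow> c < 2 \<Longrightarrow> e < 2 \<Longrightarrow>
    (\<Sum>j<4. of_real (comm_sign i j) * ypauli j a c * cnj (ypauli j b e))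
    = 2 * (of_real (transpose_sign i) * pauli i e c * pauli i b a)"
  unfolding sum_lessThan_4 ypauli_def sum_lessThan_2
  by (drule less_4_cases, (drule less_2_cases)+, elim disjE;
      simp add: pauli_def comm_sign_def transpose_sign_def mult.assoc)

lemma pauli_orthogonal:
  "i < 4 \<Longrightarrow> j < 4 \<Longrightarrow> (\<Sum>x<2. \<Sum>y<2. cnj (pauli j y x) * pauli i y x) = (if i = j then 2 else 0)"
  unfolding sum_lessThan_2 by (drule less_4_cases)+ (elim disjE; simp add: pauli_def)

lemma ypauli_orthogonal:
  "i < 4 \<Longrightarrow> j < 4 \<Longrightarrow> (\<Sum>x<2. \<Sum>y<2. cnj (ypauli j y x) * ypauli i y x) = (if i = j then 2 else 0)"
  unfolding ypauli_def sum_lessThan_2 by (drule less_4_cases)+ (elim disjE; simp add: pauli_def)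

lemma comm_sign_orthogonal:
  "i < 4 \<Longrightarrow> k < 4 \<Longrightarrow> (\<Sum>j<4. comm_sign i j * comm_sign k j) = (if i = k then 4 else 0)"
  unfolding sum_lessThan_4 by (drule less_4_cases)+ (elim disjE; simp add: comm_sign_def)

section \<open>Choi forms and Kraus maps\<close>

lemma complex_of_real_nonneg_iff [simp]: "0 \<le> complex_of_real x \<longleftrightarrow> 0 \<le> x"
  by (simp add: less_eq_complex_def)

lemma cnj_mult_self_nonneg: "0 \<le> cnj z * z"
  using conjugate_square_positive[of z] by (simp add: mult.commute)

definition qform :: "nat \<Rightarrow> complex mat \<Rightarrow> (nat \<Rightarrow> complex) \<Rightarrow> complex" where
  "qform n A v = (\<Sum>i<n. \<Sum>j<n. cnj (v i) * A $$ (i, j) * v j)"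

lemma psd_iff_qform_nonneg: "psd n A \<longleftrightarrow> A \<in> carrier_mat n n \<and> (\<forall>v. 0 \<le> qform n A v)"
proof -
  have restrict: "qform n A (\<lambda>i. vec n v $ i) = qform n A v" for v
    unfolding qform_def by (intro sum.cong refl) auto
  have "psd n A \<longleftrightarrow> A \<in> carrier_mat n n \<and> (\<forall>w\<in>carrier_vec n. 0 \<le> qform n A (\<lambda>i. w $ i))"
    unfolding psd_def qform_def Let_def less_eq_complex_def by auto
  also have "\<dots> \<longleftrightarrow> A \<in> carrier_mat n n \<and> (\<forall>v. 0 \<le> qform n A v)"
    using restrict by (metis vec_carrier)
  finally show ?thesis .
qed

definition matrix_unit :: "nat \<Rightarrow> nat \<Rightarrow> nat \<Rightarrow> complex mat" where
  "matrix_unit d a b = mat d d (\<lambda>(x, y). if x = a \<and> y = b then 1 else 0)"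

lemma matrix_unit_carrier: "matrix_unit d a b \<in> carrier_mat d d"
  by (simp add: matrix_unit_def)

(* The projection onto the unnormalised maximally entangled vector sum_a e_a (x) e_a, in the
   block indexing p = a * d + i of ampl. *)
definition max_entangled :: "nat \<Rightarrow> complex mat" where
  "max_entangled d = mat (d * d) (d * d) (\<lambda>(p, q). if p mod d = p div d \<and> q mod d = q div d then 1 else 0)"

lemma block_index_less: "a < m \<Longrightarrow> i < d \<Longrightarrow> a * d + i < m * (d::nat)"
proof -
  assume "a < m" "i < d"
  then have "a * d + i < Suc a * d" by simp
  also have "\<dots> \<le> m * d" using \<open>a < m\<close> by (intro mult_right_mono) auto
  finally show ?thesis .
qed

lemma psd_max_entangled: "psd (d * d) (max_entangled d)"
  unfolding psd_iff_qform_nonneg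
proof (intro conjI allI)
  show "max_entangled d \<in> carrier_mat (d * d) (d * d)" by (simp add: max_entangled_def)
  fix v :: "nat \<Rightarrow> complex"
  define s where "s = (\<Sum>q<d * d. if q mod d = q div d then v q else 0)"
  have "qform (d * d) (max_entangled d) v
      = (\<Sum>p<d * d. \<Sum>q<d * d. cnj (if p mod d = p div d then v p else 0) * (if q mod d = q div d then v q else 0))"
    unfolding qform_def max_entangled_def by (intro sum.cong refl) auto
  also have "\<dots> = cnj s * s"
    unfolding s_def cnj_sum sum_product by (auto intro!: sum.cong)
  finally show "0 \<le> qform (d * d) (max_entangled d) v" using cnj_mult_self_nonneg by simp
qed

lemma ampl_max_entangled:
  assumes "a < d" "i < d" "b < d" "j < d"
  shows "ampl d d \<Phi> (max_entangled d) $$ (a * d + i, b * d + j) = \<Phi> (matrix_unit d a b) $$ (i, j)"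
proof -
  have "mat d d (\<lambda>(x, y). max_entangled d $$ (a * d + x, b * d + y)) = matrix_unit d a b"
    by (rule eq_matI) (use assms in \<open>auto simp: matrix_unit_def max_entangled_def block_index_less\<close>)
  then show ?thesis using assms by (simp add: ampl_def block_index_less)
qed

(* <vec L| (id (x) Phi)(max_entangled d) |vec L>, i.e. the Choi matrix of Phi evaluated on vec L. *)
definition choi_form :: "nat \<Rightarrow> (complex mat \<Rightarrow> complex mat) \<Rightarrow> complex mat \<Rightarrow> complex" where
  "choi_form d \<Phi> L =
     (\<Sum>a<d. \<Sum>b<d. \<Sum>i<d. \<Sum>j<d. cnj (L $$ (i, a)) * \<Phi> (matrix_unit d a b) $$ (i, j) * L $$ (j, b))"

lemma choi_form_cong:
  "(\<And>X. X \<in> carrier_mat d d \<Longrightarrow> \<Phi> X = \<Psi> X) \<Longrightarrow> choi_form d \<Phi> L = choi_form d \<Psi> L"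
  unfolding choi_form_def by (simp add: matrix_unit_carrier)

lemma cp_map_choi_form_nonneg:
  assumes "cp_map d \<Phi>"
  shows "0 \<le> choi_form d \<Phi> L"
proof -
  have "psd (d * d) (ampl d d \<Phi> (max_entangled d))"
    using assms psd_max_entangled unfolding cp_map_def by blast
  then have "0 \<le> qform (d * d) (ampl d d \<Phi> (max_entangled d)) (\<lambda>p. L $$ (p mod d, p div d))"
    unfolding psd_iff_qform_nonneg by blast
  also have "qform (d * d) (ampl d d \<Phi> (max_entangled d)) (\<lambda>p. L $$ (p mod d, p div d))
      = (\<Sum>a<d. \<Sum>i<d. \<Sum>b<d. \<Sum>j<d. cnj (L $$ (i, a)) * \<Phi> (matrix_unit d a b) $$ (i, j) * L $$ (j, b))"
    unfolding qform_def sum_lessThan_mult_blocks by (intro sum.cong refl) (simp add: ampl_max_entangled)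
  also have "\<dots> = choi_form d \<Phi> L"
    unfolding choi_form_def by (intro sum.cong refl sum.swap)
  finally show ?thesis .
qed

lemma cp_map_cong:
  assumes "\<And>X. X \<in> carrier_mat d d \<Longrightarrow> \<Phi> X = \<Psi> X"
  shows "cp_map d \<Phi> \<longleftrightarrow> cp_map d \<Psi>"
proof -
  have "lin_map d \<Phi> \<longleftrightarrow> lin_map d \<Psi>"
    unfolding lin_map_def by (auto simp: assms)
  moreover have "ampl k d \<Phi> X = ampl k d \<Psi> X" for k X
    unfolding ampl_def by (simp add: assms)
  ultimately show ?thesis unfolding cp_map_def by simp
qed

lemma cp_map_carrier: "cp_map d T \<Longrightarrow> X \<in> carrier_mat d d \<Longrightarrow> T X \<in> carrier_mat d d"
  by (simp add: cp_map_def lin_map_def)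

definition kraus_map ::
    "nat \<Rightarrow> 'i set \<Rightarrow> ('i \<Rightarrow> real) \<Rightarrow> ('i \<Rightarrow> complex mat) \<Rightarrow> complex mat \<Rightarrow> complex mat" where
  "kraus_map d A c K X = mat d d (\<lambda>(a, b). \<Sum>s\<in>A. complex_of_real (c s) *
      (\<Sum>x<d. \<Sum>y<d. K s $$ (a, x) * X $$ (x, y) * cnj (K s $$ (b, y))))"

lemma kraus_map_index:
  "a < d \<Longrightarrow> b < d \<Longrightarrow> kraus_map d A c K X $$ (a, b) = (\<Sum>s\<in>A. complex_of_real (c s) *
      (\<Sum>x<d. \<Sum>y<d. K s $$ (a, x) * X $$ (x, y) * cnj (K s $$ (b, y))))"
  by (simp add: kraus_map_def)

lemma kraus_map_carrier: "kraus_map d A c K X \<in> carrier_mat d d"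
  by (simp add: kraus_map_def)

lemma kraus_map_dim [simp]: "dim_row (kraus_map d A c K X) = d" "dim_col (kraus_map d A c K X) = d"
  by (simp_all add: kraus_map_def)

lemma lin_map_kraus_map: "lin_map d (kraus_map d A c K)"
  unfolding lin_map_def
proof (intro conjI ballI allI)
  fix X Y :: "complex mat"
  assume "X \<in> carrier_mat d d" "Y \<in> carrier_mat d d"
  then show "kraus_map d A c K (X + Y) = kraus_map d A c K X + kraus_map d A c K Y"
    by (intro eq_matI)
       (auto simp: kraus_map_index kraus_map_carrier distrib_left distrib_right sum.distrib)
next
  fix X :: "complex mat" and z
  assume "X \<in> carrier_mat d d"
  then show "kraus_map d A c K (z \<cdot>\<^sub>m X) = z \<cdot>\<^sub>m kraus_map d A c K X"
    by (intro eq_matI)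
       (auto simp: kraus_map_index kraus_map_carrier sum_distrib_left mult.assoc mult.left_commute)
qed (simp add: kraus_map_carrier)

lemma sum_swap_pairs:
  "(\<Sum>p\<in>P. \<Sum>q\<in>Q. \<Sum>r\<in>R. \<Sum>u\<in>U. F p q r u) = (\<Sum>r\<in>R. \<Sum>u\<in>U. \<Sum>p\<in>P. \<Sum>q\<in>Q. F p q r u)"
proof -
  have "(\<Sum>p\<in>P. \<Sum>q\<in>Q. \<Sum>r\<in>R. \<Sum>u\<in>U. F p q r u) = (\<Sum>p\<in>P. \<Sum>r\<in>R. \<Sum>q\<in>Q. \<Sum>u\<in>U. F p q r u)"
    by (intro sum.cong refl sum.swap)
  also have "\<dots> = (\<Sum>p\<in>P. \<Sum>r\<in>R. \<Sum>u\<in>U. \<Sum>q\<in>Q. F p q r u)"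
    by (intro sum.cong refl sum.swap)
  also have "\<dots> = (\<Sum>r\<in>R. \<Sum>p\<in>P. \<Sum>u\<in>U. \<Sum>q\<in>Q. F p q r u)"
    by (rule sum.swap)
  also have "\<dots> = (\<Sum>r\<in>R. \<Sum>u\<in>U. \<Sum>p\<in>P. \<Sum>q\<in>Q. F p q r u)"
    by (intro sum.cong refl sum.swap)
  finally show ?thesis .
qed

(* The amplified Kraus map is again a Kraus map, with Kraus operators I (x) K s. *)
lemma qform_ampl_kraus_map:
  "qform (k * d) (ampl k d (kraus_map d A c K) X) v =
   (\<Sum>s\<in>A. complex_of_real (c s) *
      qform (k * d) X (\<lambda>r. \<Sum>t<d. v (r div d * d + t) * cnj (K s $$ (t, r mod d))))"
proof -
  define G where "G = (\<lambda>s \<alpha> \<beta> t t' x y. complex_of_real (c s) * (cnj (v (\<alpha> * d + t)) * K s $$ (t, x) *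
        X $$ (\<alpha> * d + x, \<beta> * d + y) * cnj (K s $$ (t', y)) * v (\<beta> * d + t')))"
  have "qform (k * d) (ampl k d (kraus_map d A c K) X) v = (\<Sum>\<alpha><k. \<Sum>t<d. \<Sum>\<beta><k. \<Sum>t'<d.
      cnj (v (\<alpha> * d + t)) * (\<Sum>s\<in>A. complex_of_real (c s) * (\<Sum>x<d. \<Sum>y<d. K s $$ (t, x) *
        X $$ (\<alpha> * d + x, \<beta> * d + y) * cnj (K s $$ (t', y)))) * v (\<beta> * d + t'))"
    unfolding qform_def sum_lessThan_mult_blocks
    by (intro sum.cong refl) (simp add: ampl_def block_index_less kraus_map_index)
  also have "\<dots> = (\<Sum>\<alpha><k. \<Sum>t<d. \<Sum>\<beta><k. \<Sum>t'<d. \<Sum>s\<in>A. \<Sum>x<d. \<Sum>y<d. G s \<alpha> \<beta> t t' x y)"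
    unfolding G_def by (simp add: sum_distrib_left sum_distrib_right mult_ac)
  also have "\<dots> = (\<Sum>s\<in>A. \<Sum>\<alpha><k. \<Sum>\<beta><k. \<Sum>t<d. \<Sum>t'<d. \<Sum>x<d. \<Sum>y<d. G s \<alpha> \<beta> t t' x y)"
    by (simp only: sum.swap[of _ "{..<d}" A] sum.swap[of _ "{..<k}" A] sum.swap[of _ "{..<d}" "{..<k}"])
  also have "\<dots> = (\<Sum>s\<in>A. \<Sum>\<alpha><k. \<Sum>\<beta><k. \<Sum>x<d. \<Sum>y<d. \<Sum>t<d. \<Sum>t'<d. G s \<alpha> \<beta> t t' x y)"
    by (intro sum.cong refl sum_swap_pairs)
  also have "\<dots> = (\<Sum>s\<in>A. \<Sum>\<alpha><k. \<Sum>x<d. \<Sum>\<beta><k. \<Sum>y<d. \<Sum>t<d. \<Sum>t'<d. G s \<alpha> \<beta> t t' x y)"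
    by (simp only: sum.swap[of _ "{..<d}" "{..<k}"])
  also have "\<dots> = (\<Sum>s\<in>A. complex_of_real (c s) *
      qform (k * d) X (\<lambda>r. \<Sum>t<d. v (r div d * d + t) * cnj (K s $$ (t, r mod d))))"
    unfolding qform_def sum_lessThan_mult_blocks G_def
    by (intro sum.cong refl)
       (simp add: cnj_sum sum_distrib_left sum_distrib_right mult.assoc mult.commute mult.left_commute)
  finally show ?thesis .
qed

lemma cp_map_kraus_map:
  assumes "\<And>s. s \<in> A \<Longrightarrow> 0 \<le> c s"
  shows "cp_map d (kraus_map d A c K)"
  unfolding cp_map_def
proof (intro conjI allI impI lin_map_kraus_map)
  fix k X
  assume "psd (k * d) X"
  then show "psd (k * d) (ampl k d (kraus_map d A c K) X)"
    unfolding psd_iff_qform_nonneg qform_ampl_kraus_map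
    by (auto simp: ampl_def assms intro!: sum_nonneg mult_nonneg_nonneg)
qed

lemma kraus_map_matrix_unit:
  assumes "a < d" "b < d" "i < d" "j < d"
  shows "kraus_map d A c K (matrix_unit d a b) $$ (i, j)
    = (\<Sum>s\<in>A. complex_of_real (c s) * (K s $$ (i, a) * cnj (K s $$ (j, b))))"
proof -
  have "(\<Sum>x<d. \<Sum>y<d. K s $$ (i, x) * matrix_unit d a b $$ (x, y) * cnj (K s $$ (j, y)))
      = K s $$ (i, a) * cnj (K s $$ (j, b))" for s
  proof -
    have "K s $$ (i, x) * matrix_unit d a b $$ (x, y) * cnj (K s $$ (j, y))
        = (if x = a then (if y = b then K s $$ (i, a) * cnj (K s $$ (j, b)) else 0) else 0)"
      if "x < d" "y < d" for x y
      using that by (auto simp: matrix_unit_def)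
    then have "(\<Sum>x<d. \<Sum>y<d. K s $$ (i, x) * matrix_unit d a b $$ (x, y) * cnj (K s $$ (j, y)))
        = (\<Sum>x<d. if x = a then (\<Sum>y<d. if y = b then K s $$ (i, a) * cnj (K s $$ (j, b)) else 0) else 0)"
      by (intro sum.cong refl) simp
    then show ?thesis using assms by simp
  qed
  then show ?thesis using assms by (simp add: kraus_map_index)
qed

definition hs_inner :: "nat \<Rightarrow> complex mat \<Rightarrow> complex mat \<Rightarrow> complex" where
  "hs_inner d L K = (\<Sum>a<d. \<Sum>i<d. cnj (L $$ (i, a)) * K $$ (i, a))"

lemma choi_form_kraus_map:
  "choi_form d (kraus_map d A c K) L = (\<Sum>s\<in>A. complex_of_real (c s) * (hs_inner d L (K s) * cnj (hs_inner d L (K s))))"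
proof -
  have "choi_form d (kraus_map d A c K) L = (\<Sum>a<d. \<Sum>b<d. \<Sum>i<d. \<Sum>j<d. \<Sum>s\<in>A. complex_of_real (c s) *
      (cnj (L $$ (i, a)) * K s $$ (i, a) * (L $$ (j, b) * cnj (K s $$ (j, b)))))"
    unfolding choi_form_def
    by (intro sum.cong refl) (simp add: kraus_map_matrix_unit sum_distrib_left sum_distrib_right mult_ac)
  also have "\<dots> = (\<Sum>s\<in>A. complex_of_real (c s) * (\<Sum>a<d. \<Sum>b<d. \<Sum>i<d. \<Sum>j<d.
      cnj (L $$ (i, a)) * K s $$ (i, a) * (L $$ (j, b) * cnj (K s $$ (j, b)))))"
    by (simp only: sum.swap[of _ "{..<d}" A] sum_distrib_left)
  also have "\<dots> = (\<Sum>s\<in>A. complex_of_real (c s) * (hs_inner d L (K s) * cnj (hs_inner d L (K s))))"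
    unfolding hs_inner_def by (simp only: cnj_sum sum_product complex_cnj_mult complex_cnj_cnj)
  finally show ?thesis .
qed

(* The Hilbert-Schmidt inner product of the Choi matrices of \<Phi> and \<Psi>. *)
definition choi_pairing :: "nat \<Rightarrow> (complex mat \<Rightarrow> complex mat) \<Rightarrow> (complex mat \<Rightarrow> complex mat) \<Rightarrow> complex" where
  "choi_pairing d \<Phi> \<Psi> =
     (\<Sum>a<d. \<Sum>b<d. \<Sum>i<d. \<Sum>j<d. cnj (\<Psi> (matrix_unit d a b) $$ (i, j)) * \<Phi> (matrix_unit d a b) $$ (i, j))"

lemma choi_pairing_kraus_map:
  "choi_pairing d \<Phi> (kraus_map d A c K) = (\<Sum>s\<in>A. complex_of_real (c s) * choi_form d \<Phi> (K s))"
proof -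
  have "choi_pairing d \<Phi> (kraus_map d A c K) = (\<Sum>a<d. \<Sum>b<d. \<Sum>i<d. \<Sum>j<d. \<Sum>s\<in>A.
      complex_of_real (c s) * (cnj (K s $$ (i, a)) * \<Phi> (matrix_unit d a b) $$ (i, j) * K s $$ (j, b)))"
    unfolding choi_pairing_def
    by (intro sum.cong refl) (simp add: kraus_map_matrix_unit sum_distrib_left sum_distrib_right mult_ac)
  then show ?thesis
    unfolding choi_form_def by (simp only: sum.swap[of _ "{..<d}" A] sum_distrib_left)
qed

lemma choi_pairing_kraus_map_nonneg:
  assumes "cp_map d \<Phi>" "\<And>s. s \<in> A \<Longrightarrow> 0 \<le> c s"
  shows "0 \<le> choi_pairing d \<Phi> (kraus_map d A c K)"
  unfolding choi_pairing_kraus_map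
  by (auto intro!: sum_nonneg mult_nonneg_nonneg cp_map_choi_form_nonneg assms)

lemma choi_pairing_cong:
  assumes "\<And>X. X \<in> carrier_mat d d \<Longrightarrow> \<Phi> X = \<Phi>' X" "\<And>X. X \<in> carrier_mat d d \<Longrightarrow> \<Psi> X = \<Psi>' X"
  shows "choi_pairing d \<Phi> \<Psi> = choi_pairing d \<Phi>' \<Psi>'"
  unfolding choi_pairing_def by (simp add: assms matrix_unit_carrier)

lemma choi_pairing_add:
  assumes "\<And>X. X \<in> carrier_mat d d \<Longrightarrow> \<Phi> X \<in> carrier_mat d d"
    and "\<And>X. X \<in> carrier_mat d d \<Longrightarrow> \<Phi>' X \<in> carrier_mat d d"
  shows "choi_pairing d (\<lambda>X. \<Phi> X + \<Phi>' X) \<Psi> = choi_pairing d \<Phi> \<Psi> + choi_pairing d \<Phi>' \<Psi>"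
  unfolding choi_pairing_def sum.distrib[symmetric]
proof (intro sum.cong refl)
  fix a b i j
  assume "i \<in> {..<d}" "j \<in> {..<d}"
  moreover have "\<Phi> (matrix_unit d a b) \<in> carrier_mat d d" "\<Phi>' (matrix_unit d a b) \<in> carrier_mat d d"
    using assms matrix_unit_carrier by blast+
  ultimately show "cnj (\<Psi> (matrix_unit d a b) $$ (i, j)) * (\<Phi> (matrix_unit d a b) + \<Phi>' (matrix_unit d a b)) $$ (i, j)
    = cnj (\<Psi> (matrix_unit d a b) $$ (i, j)) * \<Phi> (matrix_unit d a b) $$ (i, j)
      + cnj (\<Psi> (matrix_unit d a b) $$ (i, j)) * \<Phi>' (matrix_unit d a b) $$ (i, j)"
    by (auto simp: distrib_left)
qed

lemma choi_pairing_transpose: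
  assumes "\<And>X. X \<in> carrier_mat d d \<Longrightarrow> \<Phi> X \<in> carrier_mat d d"
    and "\<And>X. X \<in> carrier_mat d d \<Longrightarrow> \<Psi> X \<in> carrier_mat d d"
  shows "choi_pairing d (\<lambda>X. transpose_mat (\<Phi> X)) \<Psi> = choi_pairing d \<Phi> (\<lambda>X. transpose_mat (\<Psi> X))"
proof -
  have c: "\<Phi> (matrix_unit d a b) \<in> carrier_mat d d" "\<Psi> (matrix_unit d a b) \<in> carrier_mat d d" for a b
    using assms matrix_unit_carrier by blast+
  have dim: "dim_row (\<Phi> (matrix_unit d a b)) = d" "dim_col (\<Phi> (matrix_unit d a b)) = d"
    "dim_row (\<Psi> (matrix_unit d a b)) = d" "dim_col (\<Psi> (matrix_unit d a b)) = d" for a b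
    using c[of a b] by auto
  have "choi_pairing d (\<lambda>X. transpose_mat (\<Phi> X)) \<Psi>
      = (\<Sum>a<d. \<Sum>b<d. \<Sum>i<d. \<Sum>j<d. cnj (\<Psi> (matrix_unit d a b) $$ (i, j)) * \<Phi> (matrix_unit d a b) $$ (j, i))"
    unfolding choi_pairing_def by (intro sum.cong refl) (simp add: dim)
  also have "\<dots> = (\<Sum>a<d. \<Sum>b<d. \<Sum>j<d. \<Sum>i<d. cnj (\<Psi> (matrix_unit d a b) $$ (i, j)) * \<Phi> (matrix_unit d a b) $$ (j, i))"
    by (intro sum.cong refl sum.swap)
  also have "\<dots> = choi_pairing d \<Phi> (\<lambda>X. transpose_mat (\<Psi> X))"
    unfolding choi_pairing_def by (intro sum.cong refl) (simp add: dim)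
  finally show ?thesis .
qed

section \<open>Pauli diagonal maps as Kraus maps\<close>

definition kron_tensor :: "(nat \<Rightarrow> nat \<Rightarrow> nat \<Rightarrow> complex) \<Rightarrow> nat list \<Rightarrow> complex mat" where
  "kron_tensor F is = mat (2 ^ length is) (2 ^ length is)
     (\<lambda>(a, b). \<Prod>k<length is. F (is ! k) (qbit k a) (qbit k b))"

lemma pauli_tensor_eq_kron_tensor: "pauli_tensor = kron_tensor pauli"
  by (rule ext) (simp add: pauli_tensor_def kron_tensor_def)

lemma kron_tensor_index:
  "is \<in> pidx N \<Longrightarrow> a < 2 ^ N \<Longrightarrow> b < 2 ^ N \<Longrightarrow>
    kron_tensor F is $$ (a, b) = (\<Prod>k<N. F (is ! k) (qbit k a) (qbit k b))"
  by (simp add: kron_tensor_def pidx_length)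

lemma kron_tensor_carrier: "is \<in> pidx N \<Longrightarrow> kron_tensor F is \<in> carrier_mat (2 ^ N) (2 ^ N)"
  by (simp add: kron_tensor_def pidx_length)

definition comm_sign_tensor :: "nat \<Rightarrow> nat list \<Rightarrow> nat list \<Rightarrow> real" where
  "comm_sign_tensor N is js = (\<Prod>k<N. comm_sign (is ! k) (js ! k))"

definition transpose_sign_tensor :: "nat \<Rightarrow> nat list \<Rightarrow> real" where
  "transpose_sign_tensor N is = (\<Prod>k<N. transpose_sign (is ! k))"

(* The weights of Pi_mu in its Kraus decomposition by Pauli tensors. *)
definition kraus_weight :: "nat \<Rightarrow> (nat list \<Rightarrow> real) \<Rightarrow> nat list \<Rightarrow> real" where
  "kraus_weight N \<mu> js = (\<Sum>is\<in>pidx N. comm_sign_tensor N is js * \<mu> is) / 4 ^ N"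

lemma kron_tensor_kernel:
  assumes "is \<in> pidx N" "a < 2 ^ N" "b < 2 ^ N" "c < 2 ^ N" "e < 2 ^ N"
    and kernel: "\<And>i a b c e. i < 4 \<Longrightarrow> a < 2 \<Longrightarrow> b < 2 \<Longrightarrow> c < 2 \<Longrightarrow> e < 2 \<Longrightarrow>
      (\<Sum>j<4. of_real (comm_sign i j) * F j a c * cnj (F j b e)) = 2 * G i a b c e"
  shows "(\<Sum>js\<in>pidx N. of_real (comm_sign_tensor N is js) * kron_tensor F js $$ (a, c) * cnj (kron_tensor F js $$ (b, e)))
     = 2 ^ N * (\<Prod>k<N. G (is ! k) (qbit k a) (qbit k b) (qbit k c) (qbit k e))"
proof -
  have "(\<Sum>js\<in>pidx N. of_real (comm_sign_tensor N is js) * kron_tensor F js $$ (a, c) * cnj (kron_tensor F js $$ (b, e)))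
     = (\<Sum>js\<in>pidx N. \<Prod>k<N. of_real (comm_sign (is ! k) (js ! k)) * F (js ! k) (qbit k a) (qbit k c)
          * cnj (F (js ! k) (qbit k b) (qbit k e)))"
    by (intro sum.cong refl) (simp add: kron_tensor_index assms comm_sign_tensor_def prod.distrib)
  also have "\<dots> = (\<Prod>k<N. \<Sum>j<4. of_real (comm_sign (is ! k) j) * F j (qbit k a) (qbit k c) * cnj (F j (qbit k b) (qbit k e)))"
    by (rule sum_pidx_prod_nth)
  also have "\<dots> = (\<Prod>k<N. 2 * G (is ! k) (qbit k a) (qbit k b) (qbit k c) (qbit k e))"
    by (intro prod.cong refl kernel) (auto simp: pidx_nth_less[OF assms(1)] qbit_less)
  finally show ?thesis by (simp add: prod.distrib)
qed

lemma mtrace_mult: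
  "A \<in> carrier_mat d d \<Longrightarrow> X \<in> carrier_mat d d \<Longrightarrow> mtrace (A * X) = (\<Sum>e<d. \<Sum>c<d. A $$ (e, c) * X $$ (c, e))"
  unfolding mtrace_def by (intro sum.cong refl) (auto simp: scalar_prod_def atLeast0LessThan)

(* Swapping the two sums is the passage from the channel form of Pi_mu to a Kraus form. *)
lemma pauli_sum_eq_kraus_map:
  assumes X: "X \<in> carrier_mat (2 ^ N) (2 ^ N)" and ab: "a < 2 ^ N" "b < 2 ^ N"
    and kernel: "\<And>is a b c e. is \<in> pidx N \<Longrightarrow> a < 2 ^ N \<Longrightarrow> b < 2 ^ N \<Longrightarrow> c < 2 ^ N \<Longrightarrow> e < 2 ^ N \<Longrightarrow>
      (\<Sum>js\<in>pidx N. of_real (comm_sign_tensor N is js) * K js $$ (a, c) * cnj (K js $$ (b, e)))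
       = 2 ^ N * (pauli_tensor is $$ (e, c) * Z is a b)"
  shows "(\<Sum>is\<in>pidx N. of_real (\<mu> is / 2 ^ N) * mtrace (pauli_tensor is * X) * Z is a b)
      = kraus_map (2 ^ N) (pidx N) (kraus_weight N \<mu>) K X $$ (a, b)"
proof -
  let ?d = "2 ^ N :: nat"
  have "kraus_map ?d (pidx N) (kraus_weight N \<mu>) K X $$ (a, b)
     = (\<Sum>js\<in>pidx N. \<Sum>is\<in>pidx N. of_real (comm_sign_tensor N is js * \<mu> is / 4 ^ N) *
          (\<Sum>x<?d. \<Sum>y<?d. K js $$ (a, x) * X $$ (x, y) * cnj (K js $$ (b, y))))"
    by (simp add: kraus_map_index ab kraus_weight_def sum_divide_distrib sum_distrib_right)
  also have "\<dots> = (\<Sum>is\<in>pidx N. \<Sum>js\<in>pidx N. of_real (comm_sign_tensor N is js * \<mu> is / 4 ^ N) *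
          (\<Sum>x<?d. \<Sum>y<?d. K js $$ (a, x) * X $$ (x, y) * cnj (K js $$ (b, y))))"
    by (rule sum.swap)
  also have "\<dots> = (\<Sum>is\<in>pidx N. of_real (\<mu> is / 4 ^ N) * (\<Sum>x<?d. \<Sum>y<?d. X $$ (x, y) *
          (\<Sum>js\<in>pidx N. of_real (comm_sign_tensor N is js) * K js $$ (a, x) * cnj (K js $$ (b, y)))))"
    by (intro sum.cong refl)
       (simp add: sum_distrib_left sum_distrib_right sum.swap[of _ "pidx N" "{..<?d}"] mult_ac)
  also have "\<dots> = (\<Sum>is\<in>pidx N. of_real (\<mu> is / 4 ^ N) * (\<Sum>x<?d. \<Sum>y<?d. X $$ (x, y) *
          (2 ^ N * (pauli_tensor is $$ (y, x) * Z is a b))))"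
    by (intro sum.cong refl) (simp add: kernel ab)
  also have "\<dots> = (\<Sum>is\<in>pidx N. of_real (\<mu> is / 2 ^ N) * mtrace (pauli_tensor is * X) * Z is a b)"
  proof (intro sum.cong refl)
    fix "is"
    assume "is \<in> pidx N"
    then have "pauli_tensor is \<in> carrier_mat ?d ?d"
      by (simp add: kron_tensor_carrier pauli_tensor_eq_kron_tensor)
    moreover have "(4::complex) ^ N = 2 ^ N * 2 ^ N"
      by (simp add: power_mult_distrib[symmetric])
    moreover have "(\<Sum>e<?d. \<Sum>c<?d. pauli_tensor is $$ (e, c) * X $$ (c, e))
        = (\<Sum>c<?d. \<Sum>e<?d. pauli_tensor is $$ (e, c) * X $$ (c, e))"
      by (rule sum.swap)
    ultimately show "of_real (\<mu> is / 4 ^ N) * (\<Sum>x<?d. \<Sum>y<?d. X $$ (x, y) * (2 ^ N * (pauli_tensor is $$ (y, x) * Z is a b)))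
        = of_real (\<mu> is / 2 ^ N) * mtrace (pauli_tensor is * X) * Z is a b"
      by (simp add: mtrace_mult X sum_distrib_left sum_distrib_right mult_ac)
  qed
  finally show ?thesis by simp
qed

lemma pauli_map_dim [simp]: "dim_row (pauli_map N \<mu> X) = 2 ^ N" "dim_col (pauli_map N \<mu> X) = 2 ^ N"
  by (simp_all add: pauli_map_def)

lemma pauli_map_eq_kraus_map:
  assumes "X \<in> carrier_mat (2 ^ N) (2 ^ N)"
  shows "pauli_map N \<mu> X = kraus_map (2 ^ N) (pidx N) (kraus_weight N \<mu>) (kron_tensor pauli) X"
proof (rule eq_matI)
  fix a b
  assume "a < dim_row (kraus_map (2 ^ N) (pidx N) (kraus_weight N \<mu>) (kron_tensor pauli) X)"
    and "b < dim_col (kraus_map (2 ^ N) (pidx N) (kraus_weight N \<mu>) (kron_tensor pauli) X)"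
  then have ab: "a < 2 ^ N" "b < 2 ^ N" by simp_all
  have "(\<Sum>js\<in>pidx N. of_real (comm_sign_tensor N is js) * kron_tensor pauli js $$ (a', c) * cnj (kron_tensor pauli js $$ (b', e)))
      = 2 ^ N * (pauli_tensor is $$ (e, c) * pauli_tensor is $$ (a', b'))"
    if "is \<in> pidx N" "a' < 2 ^ N" "b' < 2 ^ N" "c < 2 ^ N" "e < 2 ^ N" for "is" a' b' c e
    using kron_tensor_kernel[OF that pauli_kernel_comm_sign] that
    by (simp add: pauli_tensor_eq_kron_tensor kron_tensor_index prod.distrib)
  then show "pauli_map N \<mu> X $$ (a, b) = kraus_map (2 ^ N) (pidx N) (kraus_weight N \<mu>) (kron_tensor pauli) X $$ (a, b)"
    using pauli_sum_eq_kraus_map[OF assms ab, where Z = "\<lambda>is a b. pauli_tensor is $$ (a, b)"] ab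
    by (simp add: pauli_map_def)
qed simp_all

lemma transpose_sign_tensor_square: "transpose_sign_tensor N is * transpose_sign_tensor N is = 1"
  unfolding transpose_sign_tensor_def prod.distrib[symmetric]
  by (intro prod.neutral) (simp add: transpose_sign_def)

lemma of_real_sign_cancel:
  assumes "e * e = 1"
  shows "complex_of_real (e * x / c) * t * (complex_of_real e * s) = complex_of_real (x / c) * t * s"
proof -
  have "complex_of_real (e * x / c) * t * (complex_of_real e * s) = complex_of_real (e * e * (x / c)) * t * s"
    by (simp add: mult_ac)
  then show ?thesis
    by (simp only: assms mult_1)
qed

lemma transpose_pauli_map_eq_kraus_map:
  assumes "X \<in> carrier_mat (2 ^ N) (2 ^ N)"
  shows "transpose_mat (pauli_map N \<mu> X)
    = kraus_map (2 ^ N) (pidx N) (kraus_weight N (\<lambda>is. transpose_sign_tensor N is * \<mu> is)) (kron_tensor ypauli) X"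
proof (rule eq_matI)
  let ?\<nu> = "transpose_sign_tensor N"
  fix a b
  assume "a < dim_row (kraus_map (2 ^ N) (pidx N) (kraus_weight N (\<lambda>is. ?\<nu> is * \<mu> is)) (kron_tensor ypauli) X)"
    and "b < dim_col (kraus_map (2 ^ N) (pidx N) (kraus_weight N (\<lambda>is. ?\<nu> is * \<mu> is)) (kron_tensor ypauli) X)"
  then have ab: "a < 2 ^ N" "b < 2 ^ N" by simp_all
  have "(\<Sum>js\<in>pidx N. of_real (comm_sign_tensor N is js) * kron_tensor ypauli js $$ (a', c) * cnj (kron_tensor ypauli js $$ (b', e)))
      = 2 ^ N * (pauli_tensor is $$ (e, c) * (of_real (?\<nu> is) * pauli_tensor is $$ (b', a')))"
    if "is \<in> pidx N" "a' < 2 ^ N" "b' < 2 ^ N" "c < 2 ^ N" "e < 2 ^ N" for "is" a' b' c e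
    using kron_tensor_kernel[OF that ypauli_kernel_comm_sign] that
    by (simp add: pauli_tensor_eq_kron_tensor kron_tensor_index transpose_sign_tensor_def prod.distrib mult_ac)
  note kernel = this
  have "transpose_mat (pauli_map N \<mu> X) $$ (a, b)
      = (\<Sum>is\<in>pidx N. of_real (\<mu> is / 2 ^ N) * mtrace (pauli_tensor is * X) * pauli_tensor is $$ (b, a))"
    using ab by (simp add: pauli_map_def)
  also have "\<dots> = (\<Sum>is\<in>pidx N. of_real (?\<nu> is * \<mu> is / 2 ^ N) * mtrace (pauli_tensor is * X)
      * (of_real (?\<nu> is) * pauli_tensor is $$ (b, a)))"
    by (intro sum.cong refl) (simp only: of_real_sign_cancel[OF transpose_sign_tensor_square])
  also have "\<dots> = kraus_map (2 ^ N) (pidx N) (kraus_weight N (\<lambda>is. ?\<nu> is * \<mu> is)) (kron_tensor ypauli) X $$ (a, b)"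
    by (rule pauli_sum_eq_kraus_map[OF assms ab kernel])
  finally show "transpose_mat (pauli_map N \<mu> X) $$ (a, b)
      = kraus_map (2 ^ N) (pidx N) (kraus_weight N (\<lambda>is. ?\<nu> is * \<mu> is)) (kron_tensor ypauli) X $$ (a, b)" .
qed simp_all

lemma kron_tensor_hs_orthogonal:
  assumes "is \<in> pidx N" "js \<in> pidx N"
    and orthogonal: "\<And>i j. i < 4 \<Longrightarrow> j < 4 \<Longrightarrow> (\<Sum>x<2. \<Sum>y<2. cnj (F j y x) * F i y x) = (if i = j then 2 else 0)"
  shows "hs_inner (2 ^ N) (kron_tensor F js) (kron_tensor F is) = (if is = js then 2 ^ N else 0)"
proof -
  have "hs_inner (2 ^ N) (kron_tensor F js) (kron_tensor F is)
      = (\<Sum>a<2 ^ N. \<Sum>i<2 ^ N. \<Prod>k<N. cnj (F (js ! k) (qbit k i) (qbit k a)) * F (is ! k) (qbit k i) (qbit k a))"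
    unfolding hs_inner_def by (intro sum.cong refl) (simp add: kron_tensor_index[OF assms(1)] kron_tensor_index[OF assms(2)] prod.distrib)
  also have "\<dots> = (\<Sum>a<2 ^ N. \<Prod>k<N. \<Sum>y<2. cnj (F (js ! k) y (qbit k a)) * F (is ! k) y (qbit k a))"
    by (intro sum.cong refl sum_qbit_prod)
  also have "\<dots> = (\<Prod>k<N. \<Sum>x<2. \<Sum>y<2. cnj (F (js ! k) y x) * F (is ! k) y x)"
    by (rule sum_qbit_prod)
  also have "\<dots> = (\<Prod>k<N. if is ! k = js ! k then 2 else 0)"
    by (intro prod.cong refl orthogonal) (auto simp: pidx_nth_less[OF assms(1)] pidx_nth_less[OF assms(2)])
  also have "\<dots> = (if is = js then 2 ^ N else 0)"
    by (rule prod_nth_eq_delta[OF assms(1,2)])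
  finally show ?thesis .
qed

lemma choi_form_kraus_map_kron_tensor:
  assumes "js \<in> pidx N"
    and orthogonal: "\<And>i j. i < 4 \<Longrightarrow> j < 4 \<Longrightarrow> (\<Sum>x<2. \<Sum>y<2. cnj (F j y x) * F i y x) = (if i = j then 2 else 0)"
  shows "choi_form (2 ^ N) (kraus_map (2 ^ N) (pidx N) c (kron_tensor F)) (kron_tensor F js) = of_real (4 ^ N * c js)"
proof -
  have "choi_form (2 ^ N) (kraus_map (2 ^ N) (pidx N) c (kron_tensor F)) (kron_tensor F js)
      = (\<Sum>is\<in>pidx N. if is = js then of_real (c js) * (2 ^ N * 2 ^ N) else 0)"
    unfolding choi_form_kraus_map
    by (intro sum.cong refl) (simp add: kron_tensor_hs_orthogonal[OF _ assms(1) orthogonal])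
  also have "\<dots> = of_real (4 ^ N * c js)"
    using assms(1) finite_pidx by (simp add: power_mult_distrib[symmetric])
  finally show ?thesis .
qed

(* Complete positivity of a Kraus map with orthogonal Kraus operators is read off its weights:
   the Choi form at the j-th Kraus operator isolates the j-th weight. *)
lemma cp_map_iff_kraus_weights_nonneg:
  assumes \<Phi>: "\<And>X. X \<in> carrier_mat (2 ^ N) (2 ^ N) \<Longrightarrow> \<Phi> X = kraus_map (2 ^ N) (pidx N) c (kron_tensor F) X"
    and orthogonal: "\<And>i j. i < 4 \<Longrightarrow> j < 4 \<Longrightarrow> (\<Sum>x<2. \<Sum>y<2. cnj (F j y x) * F i y x) = (if i = j then 2 else 0)"
  shows "cp_map (2 ^ N) \<Phi> \<longleftrightarrow> (\<forall>js\<in>pidx N. 0 \<le> c js)"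
proof
  assume cp: "cp_map (2 ^ N) \<Phi>"
  show "\<forall>js\<in>pidx N. 0 \<le> c js"
  proof
    fix js
    assume js: "js \<in> pidx N"
    have "0 \<le> choi_form (2 ^ N) \<Phi> (kron_tensor F js)"
      by (rule cp_map_choi_form_nonneg[OF cp])
    also have "choi_form (2 ^ N) \<Phi> (kron_tensor F js) = of_real (4 ^ N * c js)"
      using choi_form_cong[OF \<Phi>] choi_form_kraus_map_kron_tensor[OF js orthogonal] by simp
    finally have "0 \<le> (4::real) ^ N * c js"
      by (simp only: complex_of_real_nonneg_iff)
    then show "0 \<le> c js"
      by (metis zero_le_mult_iff zero_less_power zero_less_numeral not_le)
  qed
next
  assume "\<forall>js\<in>pidx N. 0 \<le> c js"
  then have "cp_map (2 ^ N) (kraus_map (2 ^ N) (pidx N) c (kron_tensor F))"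
    by (intro cp_map_kraus_map) auto
  then show "cp_map (2 ^ N) \<Phi>"
    using cp_map_cong[OF \<Phi>] by simp
qed

lemma CP_iff_kraus_weight_nonneg:
  "\<mu> \<in> tens N \<Longrightarrow> \<mu> \<in> CP N \<longleftrightarrow> (\<forall>js\<in>pidx N. 0 \<le> kraus_weight N \<mu> js)"
  unfolding CP_def using cp_map_iff_kraus_weights_nonneg[OF pauli_map_eq_kraus_map pauli_orthogonal]
  by simp

lemma coCP_iff_kraus_weight_nonneg:
  "\<mu> \<in> tens N \<Longrightarrow>
    \<mu> \<in> coCP N \<longleftrightarrow> (\<forall>js\<in>pidx N. 0 \<le> kraus_weight N (\<lambda>is. transpose_sign_tensor N is * \<mu> is) js)"
  unfolding coCP_def using cp_map_iff_kraus_weights_nonneg[OF transpose_pauli_map_eq_kraus_map ypauli_orthogonal]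
  by simp

section \<open>The Kraus weight transform\<close>

lemma comm_sign_tensor_sym: "comm_sign_tensor N is js = comm_sign_tensor N js is"
  unfolding comm_sign_tensor_def by (intro prod.cong refl) (auto simp: comm_sign_def)

lemma comm_sign_tensor_orthogonal:
  assumes "is \<in> pidx N" "ks \<in> pidx N"
  shows "(\<Sum>js\<in>pidx N. comm_sign_tensor N is js * comm_sign_tensor N ks js) = (if is = ks then 4 ^ N else 0)"
proof -
  have "(\<Sum>js\<in>pidx N. comm_sign_tensor N is js * comm_sign_tensor N ks js)
      = (\<Sum>js\<in>pidx N. \<Prod>k<N. comm_sign (is ! k) (js ! k) * comm_sign (ks ! k) (js ! k))"
    unfolding comm_sign_tensor_def by (simp add: prod.distrib)
  also have "\<dots> = (\<Prod>k<N. \<Sum>j<4. comm_sign (is ! k) j * comm_sign (ks ! k) j)"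
    by (rule sum_pidx_prod_nth)
  also have "\<dots> = (\<Prod>k<N. if is ! k = ks ! k then 4 else 0)"
    by (intro prod.cong refl comm_sign_orthogonal)
       (auto simp: pidx_nth_less[OF assms(1)] pidx_nth_less[OF assms(2)])
  also have "\<dots> = (if is = ks then 4 ^ N else 0)"
    by (rule prod_nth_eq_delta[OF assms])
  finally show ?thesis .
qed

lemma kraus_weight_inner:
  "(\<Sum>js\<in>pidx N. kraus_weight N \<mu> js * kraus_weight N \<kappa> js) = (\<Sum>is\<in>pidx N. \<mu> is * \<kappa> is) / 4 ^ N"
proof -
  let ?H = "comm_sign_tensor N"
  have "(\<Sum>js\<in>pidx N. kraus_weight N \<mu> js * kraus_weight N \<kappa> js)
      = (\<Sum>js\<in>pidx N. \<Sum>is\<in>pidx N. \<Sum>ks\<in>pidx N. (?H is js * \<mu> is) * (?H ks js * \<kappa> ks)) / (4 ^ N * 4 ^ N)"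
    unfolding kraus_weight_def by (simp add: sum_product sum_divide_distrib)
  also have "(\<Sum>js\<in>pidx N. \<Sum>is\<in>pidx N. \<Sum>ks\<in>pidx N. (?H is js * \<mu> is) * (?H ks js * \<kappa> ks))
      = (\<Sum>is\<in>pidx N. \<Sum>ks\<in>pidx N. \<Sum>js\<in>pidx N. (?H is js * \<mu> is) * (?H ks js * \<kappa> ks))"
    by (subst sum.swap) (intro sum.cong refl sum.swap)
  also have "\<dots> = (\<Sum>is\<in>pidx N. \<Sum>ks\<in>pidx N. \<mu> is * \<kappa> ks * (\<Sum>js\<in>pidx N. ?H is js * ?H ks js))"
    by (simp add: sum_distrib_left mult_ac)
  also have "\<dots> = (\<Sum>is\<in>pidx N. \<Sum>ks\<in>pidx N. if ks = is then \<mu> is * \<kappa> is * 4 ^ N else 0)"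
    by (intro sum.cong refl) (auto simp: comm_sign_tensor_orthogonal)
  also have "\<dots> = (\<Sum>is\<in>pidx N. \<mu> is * \<kappa> is) * 4 ^ N"
    by (simp add: finite_pidx sum_distrib_right)
  finally show ?thesis by simp
qed

definition kraus_weight_adjoint :: "nat \<Rightarrow> (nat list \<Rightarrow> real) \<Rightarrow> nat list \<Rightarrow> real" where
  "kraus_weight_adjoint N g is =
     (if is \<in> pidx N then (\<Sum>js\<in>pidx N. g js * comm_sign_tensor N is js) / 4 ^ N else 0)"

lemma kraus_weight_adjoint_tens: "kraus_weight_adjoint N g \<in> tens N"
  by (simp add: kraus_weight_adjoint_def tens_def)

lemma kraus_weight_kraus_weight_adjoint:
  assumes "js' \<in> pidx N"
  shows "kraus_weight N (kraus_weight_adjoint N g) js' = g js' / 4 ^ N"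
proof -
  let ?H = "comm_sign_tensor N"
  have "kraus_weight N (kraus_weight_adjoint N g) js'
      = (\<Sum>is\<in>pidx N. \<Sum>js\<in>pidx N. ?H is js' * (g js * ?H is js)) / (4 ^ N * 4 ^ N)"
    unfolding kraus_weight_def kraus_weight_adjoint_def by (simp add: sum_distrib_left sum_divide_distrib)
  also have "(\<Sum>is\<in>pidx N. \<Sum>js\<in>pidx N. ?H is js' * (g js * ?H is js))
      = (\<Sum>js\<in>pidx N. g js * (\<Sum>is\<in>pidx N. ?H js' is * ?H js is))"
    by (subst sum.swap) (simp add: sum_distrib_left comm_sign_tensor_sym mult_ac)
  also have "\<dots> = (\<Sum>js\<in>pidx N. if js = js' then g js' * 4 ^ N else 0)"
    by (intro sum.cong refl) (auto simp: comm_sign_tensor_orthogonal assms)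
  also have "\<dots> = g js' * 4 ^ N"
    using assms by (simp add: finite_pidx)
  finally show ?thesis by simp
qed

lemma kraus_weight_indicator:
  "is0 \<in> pidx N \<Longrightarrow> kraus_weight N (\<lambda>is. if is = is0 then 1 else 0) js = comm_sign_tensor N is0 js / 4 ^ N"
  unfolding kraus_weight_def by (simp add: finite_pidx if_distrib cong: if_cong)

lemma kraus_weight_diff:
  "kraus_weight N (\<lambda>z. x z - t * y z) js = kraus_weight N x js - t * kraus_weight N y js"
  unfolding kraus_weight_def
  by (simp add: right_diff_distrib sum_subtractf sum_distrib_left diff_divide_distrib mult_ac)

lemma kraus_weight_restrict:
  "kraus_weight N (\<lambda>is. if is \<in> pidx N then x is else 0) js = kraus_weight N x js"
  unfolding kraus_weight_def by (intro arg_cong2[where f = "(/)"] sum.cong refl) auto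

lemma kraus_weight_scale: "kraus_weight N (\<lambda>is. c * f is) js = c * kraus_weight N f js"
  unfolding kraus_weight_def by (simp add: sum_distrib_left mult_ac)

section \<open>Farkas' lemma\<close>

(* Linearity is spelled out because the function type 'i \<Rightarrow> real has no real_vector instance. *)
definition linear_functional :: "(('i \<Rightarrow> real) \<Rightarrow> real) \<Rightarrow> bool" where
  "linear_functional f \<longleftrightarrow> (\<forall>x y t. f (\<lambda>z. x z - t * y z) = f x - t * f y)"

lemma linear_functionalD: "linear_functional f \<Longrightarrow> f (\<lambda>z. x z - t * y z) = f x - t * f y"
  by (simp add: linear_functional_def)

lemma linear_functional_zero: "linear_functional f \<Longrightarrow> f (\<lambda>z. 0) = 0"
  using linear_functionalD[of f "\<lambda>z. 0" 1 "\<lambda>z. 0"] by simp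

lemma linear_functional_uminus: "linear_functional f \<Longrightarrow> f (\<lambda>z. 0 - 1 * x z) = - f x"
  using linear_functionalD[of f "\<lambda>z. 0" 1 x] linear_functional_zero[of f] by simp

lemma linear_functional_diff:
  assumes "linear_functional f" "linear_functional g"
  shows "linear_functional (\<lambda>x. f x - c * g x)"
  unfolding linear_functional_def
  by (simp add: linear_functionalD[OF assms(1)] linear_functionalD[OF assms(2)] algebra_simps)

(* Proved by eliminating one functional at a time. *)
lemma farkas_lemma:
  assumes "finite I" "\<forall>i\<in>I. linear_functional (a i)" "linear_functional b"
    and "\<forall>x. (\<forall>i\<in>I. 0 \<le> a i x) \<longrightarrow> 0 \<le> b x"
  shows "\<exists>\<gamma>. (\<forall>i\<in>I. 0 \<le> \<gamma> i) \<and> (\<forall>x. b x = (\<Sum>i\<in>I. \<gamma> i * a i x))"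
  using assms
proof (induction I arbitrary: a b rule: finite_induct)
  case empty
  have "b x = 0" for x
    using empty(3)[rule_format, of x] empty(3)[rule_format, of "\<lambda>z. 0 - 1 * x z"]
      linear_functional_uminus[OF empty(2)] by simp
  then show ?case by simp
next
  case (insert j I)
  show ?case
  proof (cases "\<forall>x. (\<forall>i\<in>I. 0 \<le> a i x) \<longrightarrow> 0 \<le> b x")
    case True
    then obtain \<gamma> where \<gamma>: "\<forall>i\<in>I. 0 \<le> \<gamma> i" "\<forall>x. b x = (\<Sum>i\<in>I. \<gamma> i * a i x)"
      using insert.IH[of a b] insert.prems by auto
    have "(\<Sum>i\<in>I. (\<gamma>(j := 0)) i * a i x) = (\<Sum>i\<in>I. \<gamma> i * a i x)" for x
      using insert.hyps by (intro sum.cong) auto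
    then show ?thesis
      using \<gamma> insert.hyps by (intro exI[of _ "\<gamma>(j := 0)"]) auto
  next
    case False
    then obtain x0 where x0: "\<forall>i\<in>I. 0 \<le> a i x0" "b x0 < 0"
      by (auto simp: not_le)
    define r where "r = a j x0"
    have r: "r < 0"
      using insert.prems(3) x0 unfolding r_def by (metis insert_iff not_le)
    have lin_j: "linear_functional (a j)" and lin_b: "linear_functional b"
      using insert.prems by auto
    \<comment> \<open>Project every functional along \<open>x0\<close> onto the kernel of \<open>a j\<close>.\<close>
    define a' where "a' = (\<lambda>i x. a i x - (a i x0 / r) * a j x)"
    define b' where "b' = (\<lambda>x. b x - (b x0 / r) * a j x)"
    have lin_a': "\<forall>i\<in>I. linear_functional (a' i)"
      unfolding a'_def using insert.prems(1) lin_j by (blast intro: linear_functional_diff)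
    have lin_b': "linear_functional b'"
      unfolding b'_def using lin_b lin_j by (rule linear_functional_diff)
    have "0 \<le> b' x" if "\<forall>i\<in>I. 0 \<le> a' i x" for x
    proof -
      define y where "y = (\<lambda>z. x z - (a j x / r) * x0 z)"
      have a_y: "a i y = a' i x" if "i \<in> insert j I" for i
      proof -
        have "linear_functional (a i)"
          using that insert.prems(1) by blast
        then have "a i y = a i x - (a j x / r) * a i x0"
          unfolding y_def by (rule linear_functionalD)
        then show ?thesis
          unfolding a'_def by simp
      qed
      then have "\<forall>i\<in>insert j I. 0 \<le> a i y"
        using \<open>\<forall>i\<in>I. 0 \<le> a' i x\<close> r by (auto simp: a'_def r_def)
      then have "0 \<le> b y"
        using insert.prems(3) by blast
      moreover have "b y = b' x"
        unfolding y_def b'_def by (subst linear_functionalD[OF lin_b]) (simp add: mult.commute)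
      ultimately show ?thesis by simp
    qed
    then obtain \<gamma> where \<gamma>: "\<forall>i\<in>I. 0 \<le> \<gamma> i" "\<forall>x. b' x = (\<Sum>i\<in>I. \<gamma> i * a' i x)"
      using insert.IH[OF lin_a' lin_b'] by blast
    define cj where "cj = (b x0 - (\<Sum>i\<in>I. \<gamma> i * a i x0)) / r"
    have "0 \<le> (\<Sum>i\<in>I. \<gamma> i * a i x0)"
      using \<gamma>(1) x0(1) by (intro sum_nonneg) auto
    then have cj: "0 \<le> cj"
      unfolding cj_def using r x0(2) by (intro divide_nonpos_neg) auto
    have "b x = (\<Sum>i\<in>insert j I. (\<gamma>(j := cj)) i * a i x)" for x
    proof -
      have "b x = b' x + (b x0 / r) * a j x"
        unfolding b'_def by simp
      also have "b' x = (\<Sum>i\<in>I. \<gamma> i * a i x - (\<gamma> i * a i x0 / r) * a j x)"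
        using \<gamma>(2) unfolding a'_def by (simp add: right_diff_distrib mult_ac)
      also have "\<dots> = (\<Sum>i\<in>I. \<gamma> i * a i x) - (\<Sum>i\<in>I. \<gamma> i * a i x0) / r * a j x"
        by (simp add: sum_subtractf sum_distrib_right sum_divide_distrib)
      also have "(\<Sum>i\<in>I. \<gamma> i * a i x) = (\<Sum>i\<in>I. (\<gamma>(j := cj)) i * a i x)"
        using insert.hyps by (intro sum.cong) auto
      finally show ?thesis
        using insert.hyps by (simp add: cj_def diff_divide_distrib algebra_simps)
    qed
    then show ?thesis
      using \<gamma>(1) cj by (intro exI[of _ "\<gamma>(j := cj)"]) auto
  qed
qed

section \<open>Decomposable Pauli diagonal maps\<close>

lemma choi_pairing_pauli_maps:
  "choi_pairing (2 ^ N) (pauli_map N \<mu>) (pauli_map N \<kappa>) = of_real (\<Sum>is\<in>pidx N. \<mu> is * \<kappa> is)"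
proof -
  have "choi_pairing (2 ^ N) (pauli_map N \<mu>) (pauli_map N \<kappa>)
      = choi_pairing (2 ^ N) (pauli_map N \<mu>) (kraus_map (2 ^ N) (pidx N) (kraus_weight N \<kappa>) (kron_tensor pauli))"
    by (rule choi_pairing_cong) (simp_all add: pauli_map_eq_kraus_map)
  also have "\<dots> = (\<Sum>js\<in>pidx N. of_real (kraus_weight N \<kappa> js) * of_real (4 ^ N * kraus_weight N \<mu> js))"
    unfolding choi_pairing_kraus_map
    by (intro sum.cong refl)
       (simp add: choi_form_cong[OF pauli_map_eq_kraus_map] choi_form_kraus_map_kron_tensor pauli_orthogonal)
  also have "\<dots> = of_real (4 ^ N * (\<Sum>js\<in>pidx N. kraus_weight N \<mu> js * kraus_weight N \<kappa> js))"
    by (simp add: sum_distrib_left mult_ac)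
  also have "\<dots> = of_real (\<Sum>is\<in>pidx N. \<mu> is * \<kappa> is)"
    by (simp add: kraus_weight_inner)
  finally show ?thesis .
qed

(* Pairing Choi matrices: the Choi matrix of a decomposable map pairs nonnegatively with that of a
   PPT Pauli diagonal map, and for Pauli diagonal maps this pairing is the Euclidean one. *)
lemma Dec_subset_dual_cone: "Dec N \<subseteq> dual_cone N (CP N \<inter> coCP N)"
proof
  fix \<mu>
  assume \<mu>: "\<mu> \<in> Dec N"
  let ?d = "2 ^ N :: nat"
  obtain T S where T: "cp_map ?d T" and S: "cp_map ?d S"
    and decomp: "\<forall>X \<in> carrier_mat ?d ?d. pauli_map N \<mu> X = T X + transpose_mat (S X)"
    using \<mu> unfolding Dec_def by blast
  have "0 \<le> (\<Sum>is\<in>pidx N. \<mu> is * \<kappa> is)" if \<kappa>: "\<kappa> \<in> CP N" "\<kappa> \<in> coCP N" for \<kappa>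
  proof -
    let ?\<nu> = "transpose_sign_tensor N"
    have "\<kappa> \<in> tens N"
      using \<kappa> by (simp add: CP_def)
    then have cp: "\<forall>js\<in>pidx N. 0 \<le> kraus_weight N \<kappa> js"
      and cocp: "\<forall>js\<in>pidx N. 0 \<le> kraus_weight N (\<lambda>is. ?\<nu> is * \<kappa> is) js"
      using \<kappa> CP_iff_kraus_weight_nonneg coCP_iff_kraus_weight_nonneg by blast+
    have "0 \<le> choi_pairing ?d T (kraus_map ?d (pidx N) (kraus_weight N \<kappa>) (kron_tensor pauli))
        + choi_pairing ?d S (kraus_map ?d (pidx N) (kraus_weight N (\<lambda>is. ?\<nu> is * \<kappa> is)) (kron_tensor ypauli))"
      using cp cocp by (intro add_nonneg_nonneg choi_pairing_kraus_map_nonneg T S) auto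
    also have "\<dots> = choi_pairing ?d T (pauli_map N \<kappa>) + choi_pairing ?d S (\<lambda>X. transpose_mat (pauli_map N \<kappa> X))"
      by (intro arg_cong2[where f = "(+)"] choi_pairing_cong refl pauli_map_eq_kraus_map[symmetric]
          transpose_pauli_map_eq_kraus_map[symmetric])
    also have "\<dots> = choi_pairing ?d (\<lambda>X. T X + transpose_mat (S X)) (pauli_map N \<kappa>)"
      using cp_map_carrier[OF T] cp_map_carrier[OF S]
      by (simp add: choi_pairing_add choi_pairing_transpose pauli_map_def)
    also have "\<dots> = complex_of_real (\<Sum>is\<in>pidx N. \<mu> is * \<kappa> is)"
      unfolding choi_pairing_pauli_maps[symmetric] by (rule choi_pairing_cong) (simp_all add: decomp)
    finally show ?thesis
      by (simp only: complex_of_real_nonneg_iff)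
  qed
  then show "\<mu> \<in> dual_cone N (CP N \<inter> coCP N)"
    using \<mu> by (simp add: dual_cone_def Dec_def)
qed

lemma pauli_map_add: "pauli_map N (\<lambda>is. \<mu> is + \<kappa> is) X = pauli_map N \<mu> X + pauli_map N \<kappa> X"
  by (rule eq_matI) (simp_all add: pauli_map_def sum.distrib[symmetric] add_divide_distrib distrib_right)

lemma msum_subset_Dec: "msum (CP N) (coCP N) \<subseteq> Dec N"
proof
  fix \<mu>
  assume "\<mu> \<in> msum (CP N) (coCP N)"
  then obtain p q where \<mu>: "\<mu> = (\<lambda>is. p is + q is)" and p: "p \<in> CP N" and q: "q \<in> coCP N"
    unfolding msum_def by blast
  have "\<mu> \<in> tens N"
    using p q by (simp add: \<mu> CP_def coCP_def tens_def)
  moreover have "\<forall>X \<in> carrier_mat (2 ^ N) (2 ^ N).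
      pauli_map N \<mu> X = pauli_map N p X + transpose_mat (transpose_mat (pauli_map N q X))"
    by (simp add: \<mu> pauli_map_add)
  ultimately show "\<mu> \<in> Dec N"
    using p q unfolding Dec_def CP_def coCP_def by blast
qed

lemma kraus_weight_adjoint_mem_CP:
  "\<forall>js\<in>pidx N. 0 \<le> g js \<Longrightarrow> kraus_weight_adjoint N g \<in> CP N"
  by (simp add: CP_iff_kraus_weight_nonneg kraus_weight_adjoint_tens kraus_weight_kraus_weight_adjoint)

lemma twisted_kraus_weight_adjoint_mem_coCP:
  assumes "\<forall>js\<in>pidx N. 0 \<le> h js"
  shows "(\<lambda>is. transpose_sign_tensor N is * kraus_weight_adjoint N h is) \<in> coCP N"
proof -
  let ?\<nu> = "transpose_sign_tensor N"
  have "(\<lambda>is. ?\<nu> is * (?\<nu> is * kraus_weight_adjoint N h is)) = kraus_weight_adjoint N h"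
    by (simp add: mult.assoc[symmetric] transpose_sign_tensor_square)
  moreover have "(\<lambda>is. ?\<nu> is * kraus_weight_adjoint N h is) \<in> tens N"
    using kraus_weight_adjoint_tens[of N h] by (simp add: tens_def)
  ultimately show ?thesis
    using assms by (simp add: coCP_iff_kraus_weight_nonneg kraus_weight_kraus_weight_adjoint)
qed

(* Testing the identity on the coordinate vectors recovers mu coordinatewise. *)
lemma tens_eq_of_kraus_weight_functional:
  assumes \<mu>: "\<mu> \<in> tens N"
    and eq: "\<And>x. (\<Sum>is\<in>pidx N. \<mu> is * x is) = (\<Sum>js\<in>pidx N. g js * kraus_weight N x js
      + h js * kraus_weight N (\<lambda>is. transpose_sign_tensor N is * x is) js)"
  shows "\<mu> = (\<lambda>is. kraus_weight_adjoint N g is + transpose_sign_tensor N is * kraus_weight_adjoint N h is)"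
proof
  fix is0
  let ?\<nu> = "transpose_sign_tensor N"
  show "\<mu> is0 = kraus_weight_adjoint N g is0 + ?\<nu> is0 * kraus_weight_adjoint N h is0"
  proof (cases "is0 \<in> pidx N")
    case False
    then show ?thesis
      using \<mu> by (simp add: tens_def kraus_weight_adjoint_def)
  next
    case True
    define e where "e = (\<lambda>is. if is = is0 then (1::real) else 0)"
    have "(\<lambda>is. ?\<nu> is * e is) = (\<lambda>is. ?\<nu> is0 * e is)"
      unfolding e_def by auto
    then have "kraus_weight N (\<lambda>is. ?\<nu> is * e is) js = ?\<nu> is0 * (comm_sign_tensor N is0 js / 4 ^ N)" for js
      using kraus_weight_indicator[OF True, of js] by (simp add: kraus_weight_scale e_def)
    moreover have "(\<Sum>is\<in>pidx N. \<mu> is * e is) = \<mu> is0"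
      unfolding e_def using True by (simp add: finite_pidx if_distrib cong: if_cong)
    ultimately have "\<mu> is0 = (\<Sum>js\<in>pidx N. g js * (comm_sign_tensor N is0 js / 4 ^ N)
        + h js * (?\<nu> is0 * (comm_sign_tensor N is0 js / 4 ^ N)))"
      using eq[of e] kraus_weight_indicator[OF True] unfolding e_def by simp
    also have "\<dots> = kraus_weight_adjoint N g is0 + ?\<nu> is0 * kraus_weight_adjoint N h is0"
      unfolding kraus_weight_adjoint_def using True
      by (simp add: sum.distrib sum_divide_distrib sum_distrib_left mult_ac)
    finally show ?thesis .
  qed
qed

lemma restrict_mem_CP_inter_coCP:
  assumes "\<forall>js\<in>pidx N. 0 \<le> kraus_weight N x js \<and> 0 \<le> kraus_weight N (\<lambda>is. transpose_sign_tensor N is * x is) js"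
  shows "(\<lambda>is. if is \<in> pidx N then x is else 0) \<in> CP N \<inter> coCP N"
proof -
  let ?\<nu> = "transpose_sign_tensor N"
  have "(\<lambda>is. ?\<nu> is * (if is \<in> pidx N then x is else 0)) = (\<lambda>is. if is \<in> pidx N then ?\<nu> is * x is else 0)"
    by auto
  then have "kraus_weight N (\<lambda>is. ?\<nu> is * (if is \<in> pidx N then x is else 0)) js
      = kraus_weight N (\<lambda>is. ?\<nu> is * x is) js" for js
    by (simp only: kraus_weight_restrict)
  moreover have "(\<lambda>is. if is \<in> pidx N then x is else 0) \<in> tens N"
    by (simp add: tens_def)
  ultimately show ?thesis
    using assms by (simp add: CP_iff_kraus_weight_nonneg coCP_iff_kraus_weight_nonneg kraus_weight_restrict)
qed

(* Farkas' lemma applied to the 2 * 4^N functionals cutting out CP N \<inter> coCP N. *)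
lemma dual_cone_CP_inter_coCP_functional:
  assumes "\<mu> \<in> dual_cone N (CP N \<inter> coCP N)"
  obtains g h where "\<forall>js\<in>pidx N. 0 \<le> g js \<and> 0 \<le> h js"
    and "\<And>x. (\<Sum>is\<in>pidx N. \<mu> is * x is) = (\<Sum>js\<in>pidx N. g js * kraus_weight N x js
      + h js * kraus_weight N (\<lambda>is. transpose_sign_tensor N is * x is) js)"
proof -
  let ?\<nu> = "transpose_sign_tensor N"
  have dual: "\<forall>\<kappa>\<in>CP N \<inter> coCP N. 0 \<le> (\<Sum>is\<in>pidx N. \<mu> is * \<kappa> is)"
    using assms by (simp add: dual_cone_def)
  define I where "I = pidx N \<times> (UNIV :: bool set)"
  define a where "a = (\<lambda>(js, cp) x. if cp then kraus_weight N x js else kraus_weight N (\<lambda>is. ?\<nu> is * x is) js)"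
  define b where "b = (\<lambda>x. \<Sum>is\<in>pidx N. \<mu> is * x is)"
  have "\<forall>i\<in>I. linear_functional (a i)"
    unfolding linear_functional_def a_def
    by (auto simp: kraus_weight_diff right_diff_distrib mult.left_commute)
  moreover have "linear_functional b"
    unfolding linear_functional_def b_def
    by (simp add: right_diff_distrib sum_subtractf sum_distrib_left mult_ac)
  moreover have "0 \<le> b x" if "\<forall>i\<in>I. 0 \<le> a i x" for x
  proof -
    have "\<forall>js\<in>pidx N. 0 \<le> a (js, True) x \<and> 0 \<le> a (js, False) x"
      using that by (simp add: I_def)
    then have "(\<lambda>is. if is \<in> pidx N then x is else 0) \<in> CP N \<inter> coCP N"
      by (intro restrict_mem_CP_inter_coCP) (simp add: a_def)
    then have "0 \<le> (\<Sum>is\<in>pidx N. \<mu> is * (if is \<in> pidx N then x is else 0))"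
      by (rule bspec[OF dual])
    then show ?thesis
      unfolding b_def by (simp cong: sum.cong)
  qed
  ultimately obtain \<gamma> where \<gamma>: "\<forall>i\<in>I. 0 \<le> \<gamma> i" "\<forall>x. b x = (\<Sum>i\<in>I. \<gamma> i * a i x)"
    using farkas_lemma[of I a b] by (auto simp: I_def finite_pidx)
  show ?thesis
  proof (rule that[of "\<lambda>js. \<gamma> (js, True)" "\<lambda>js. \<gamma> (js, False)"])
    show "\<forall>js\<in>pidx N. 0 \<le> \<gamma> (js, True) \<and> 0 \<le> \<gamma> (js, False)"
      using \<gamma>(1) by (simp add: I_def)
    fix x
    have "(\<Sum>i\<in>I. \<gamma> i * a i x) = (\<Sum>js\<in>pidx N. \<Sum>cp\<in>UNIV. \<gamma> (js, cp) * a (js, cp) x)"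
      unfolding I_def by (simp add: sum.cartesian_product)
    then show "(\<Sum>is\<in>pidx N. \<mu> is * x is) = (\<Sum>js\<in>pidx N. \<gamma> (js, True) * kraus_weight N x js
        + \<gamma> (js, False) * kraus_weight N (\<lambda>is. ?\<nu> is * x is) js)"
      using \<gamma>(2) by (simp add: b_def UNIV_bool a_def add.commute)
  qed
qed

lemma dual_cone_subset_msum: "dual_cone N (CP N \<inter> coCP N) \<subseteq> msum (CP N) (coCP N)"
proof
  fix \<mu>
  assume \<mu>: "\<mu> \<in> dual_cone N (CP N \<inter> coCP N)"
  obtain g h where nonneg: "\<forall>js\<in>pidx N. 0 \<le> g js \<and> 0 \<le> h js"
    and eq: "\<And>x. (\<Sum>is\<in>pidx N. \<mu> is * x is) = (\<Sum>js\<in>pidx N. g js * kraus_weight N x js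
      + h js * kraus_weight N (\<lambda>is. transpose_sign_tensor N is * x is) js)"
    using dual_cone_CP_inter_coCP_functional[OF \<mu>] by blast
  define p where "p = kraus_weight_adjoint N g"
  define q where "q = (\<lambda>is. transpose_sign_tensor N is * kraus_weight_adjoint N h is)"
  have "\<mu> = (\<lambda>is. p is + q is)"
    using \<mu> unfolding p_def q_def dual_cone_def by (intro tens_eq_of_kraus_weight_functional eq) auto
  moreover have "p \<in> CP N" "q \<in> coCP N"
    using nonneg unfolding p_def q_def
    by (auto intro!: kraus_weight_adjoint_mem_CP twisted_kraus_weight_adjoint_mem_coCP)
  ultimately show "\<mu> \<in> msum (CP N) (coCP N)"
    unfolding msum_def by blast
qed

theorem mainTheorem3:
  fixes N :: nat
  shows "Dec N = msum (CP N) (coCP N) \<and> msum (CP N) (coCP N) = dual_cone N (CP N \<inter> coCP N)"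
  using Dec_subset_dual_cone dual_cone_subset_msum msum_subset_Dec by blast

end
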